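(* For every $b\ge1$ and $u\in\mathbb{D}\setminus\{0\}$, $$F_b(u)=\int_u^{U^-}\left(\frac{\mathbf{1}_{\{b=1\}}}{1-z}+bE_{b-1}(z)\mathbf{1}_{\{b\ge2\}}-\left(b(1+\rho+s)-z\right)E_b(q)\right)\frac{R(z)^bz^{b-1}}{u^bP(u)R(u)^b}\,dz.$$
   Context: Queueing model: an $M^{[X]}/M/1$ processor-sharing queue with Poisson batch arrivals of rate $\rho>0$, exponential job services of mean $1$, unit capacity shared equally among jobs present, all random quantities independent; geometric batch sizes $\mathbb{P}(B=b)=(1-q)q^{b-1}$, $q\in(0,1)$, $\rho+q<1$. For $n\ge0,b\ge1$, $\Omega_{n,b}$ is the sojourn time of a tagged batch (arrival to departure of its last job) given $n$ jobs present at its arrival and batch size $b$; $e^*_{n,b}(s)=\mathbb{E}(e^{-s\Omega_{n,b}})$ with $s>0$ fixed and suppressed. $\mathbb{D}$ is the open unit disk. For $b\ge1$, $E_b(u)=\sum_{n\ge0}e^*_{n,b}(s)u^n$ and $F_b(u)=\frac{E_b(u)-E_b(q)}{u-q}$ for $u\ne q$, $F_b(q)=E_b'(q)$. $P(u)=u^2-(s+1+\rho+q)u+sq+\rho+q$ with roots $U^-,U^+$, $q<U^-<1<U^+$. $C^+=-\frac{U^--q}{U^+-U^-}$, $C^-=1-C^+$, $R(t)=(1-t/U^-)^{C^--1}(1-t/U^+)^{C^+-1}$. The integral is along a path from $u$ to $U^-$ in $\mathbb{D}$ on which $z\mapsto R(z)/R(u)$ is analytic. *)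

theory Defs
  imports "HOL-Complex_Analysis.Complex_Analysis"
begin

text \<open>First-step (Kolmogorov backward) equations for the Laplace transform
  f n b = E exp(-s Omega_{n,b}) of the sojourn time of a tagged batch in the
  M^[X]/M/1 processor-sharing queue with geometric batches
  P(B = k+1) = (1-q) q^k.  State (n,b): n non-tagged jobs, b tagged jobs left.
  Total event rate rho + 1 (arrival of a batch / completion of some job, the
  completing job being tagged with probability b/(n+b)).\<close>
definition ps_first_step :: "real \<Rightarrow> real \<Rightarrow> real \<Rightarrow> (nat \<Rightarrow> nat \<Rightarrow> real) \<Rightarrow> bool" where
  "ps_first_step \<rho> q s f \<longleftrightarrow>
     (\<forall>n. f n 0 = 1) \<and>
     (\<forall>n b. 1 \<le> b \<longrightarrow>
        (s + \<rho> + 1) * f n b =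
          \<rho> * (\<Sum>k. (1 - q) * q ^ k * f (n + k + 1) b)
          + (real b / real (n + b)) * f n (b - 1)
          + (real n / real (n + b)) * f (n - 1) b)"

definition estar :: "real \<Rightarrow> real \<Rightarrow> real \<Rightarrow> nat \<Rightarrow> nat \<Rightarrow> real" where
  "estar \<rho> q s = (THE f. ps_first_step \<rho> q s f \<and> (\<exists>M. \<forall>n b. \<bar>f n b\<bar> \<le> M))"

definition EE :: "real \<Rightarrow> real \<Rightarrow> real \<Rightarrow> nat \<Rightarrow> complex \<Rightarrow> complex" where
  "EE \<rho> q s b u = (\<Sum>n. complex_of_real (estar \<rho> q s n b) * u ^ n)"

definition FF :: "real \<Rightarrow> real \<Rightarrow> real \<Rightarrow> nat \<Rightarrow> complex \<Rightarrow> complex" where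
  "FF \<rho> q s b u =
     (if u = complex_of_real q then deriv (EE \<rho> q s b) (complex_of_real q)
      else (EE \<rho> q s b u - EE \<rho> q s b (complex_of_real q)) / (u - complex_of_real q))"

definition PP :: "real \<Rightarrow> real \<Rightarrow> real \<Rightarrow> complex \<Rightarrow> complex" where
  "PP \<rho> q s u = u ^ 2 - complex_of_real (s + 1 + \<rho> + q) * u + complex_of_real (s * q + \<rho> + q)"

definition Um :: "real \<Rightarrow> real \<Rightarrow> real \<Rightarrow> real" where
  "Um \<rho> q s = ((s + 1 + \<rho> + q) - sqrt ((s + 1 + \<rho> + q)^2 - 4 * (s * q + \<rho> + q))) / 2"

definition Up :: "real \<Rightarrow> real \<Rightarrow> real \<Rightarrow> real" where
  "Up \<rho> q s = ((s + 1 + \<rho> + q) + sqrt ((s + 1 + \<rho> + q)^2 - 4 * (s * q + \<rho> + q))) / 2"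

definition Cplus :: "real \<Rightarrow> real \<Rightarrow> real \<Rightarrow> real" where
  "Cplus \<rho> q s = - (Um \<rho> q s - q) / (Up \<rho> q s - Um \<rho> q s)"

definition Cminus :: "real \<Rightarrow> real \<Rightarrow> real \<Rightarrow> real" where
  "Cminus \<rho> q s = 1 - Cplus \<rho> q s"

text \<open>(R(gamma t)/R(u))^b continued along the path gamma, where L is a continuous
  branch of log(1 - gamma t / U^-) on [0,1) (the factor 1 - z/U^+ has positive
  real part on the unit disk, so the principal logarithm is used there).\<close>
definition Rratio_pow :: "real \<Rightarrow> real \<Rightarrow> real \<Rightarrow> nat \<Rightarrow> (real \<Rightarrow> complex) \<Rightarrow> (real \<Rightarrow> complex) \<Rightarrow> real \<Rightarrow> complex" where
  "Rratio_pow \<rho> q s b \<gamma> L t =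
     exp (of_nat b * (complex_of_real (Cminus \<rho> q s - 1) * (L t - L 0)
        + complex_of_real (Cplus \<rho> q s - 1) *
            (Ln (1 - \<gamma> t / complex_of_real (Up \<rho> q s)) - Ln (1 - \<gamma> 0 / complex_of_real (Up \<rho> q s)))))"

end

(*
  The first-step equations say that e* is a fixed point of an operator that contracts the
  sup-distance by the factor (1 + rho) / (1 + rho + s); so e* is the unique bounded solution, and
  the generating functions E_b and F_b (whose coefficients are sum_k q^k e*_{n+k+1,b}) converge
  on the unit disk.  Multiplying the first-step equation by (n + b) z^n and summing over n turns
  it into the linear differential equation
      z P(z) F_b'(z) = - (b P(z) + z P'(z) + b z (q - z)) F_b(z) - G_b(z),
  where G_b is the bracket in the integrand.  As R'/R = (q - z) / P, this says
      (z^b P(z) F_b(z) R(z)^b)' = - z^(b-1) R(z)^b G_b(z).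
  Integrating along the path from u to U^-, where P vanishes while R^b stays bounded, gives the
  formula.
*)

theory Submission
  imports Defs
begin

section \<open>Geometric series and contractions on bounded functions\<close>

lemma geometric_dominated_series:
  fixes d :: "nat \<Rightarrow> real"
  assumes "0 \<le> q" "q < 1" and d: "\<And>k. \<bar>d k\<bar> \<le> \<delta> * q ^ k"
  shows "summable d" and "\<bar>\<Sum>k. d k\<bar> \<le> \<delta> / (1 - q)"
proof -
  have geometric: "summable (\<lambda>k. \<delta> * q ^ k)"
    using assms by (intro summable_mult summable_geometric) auto
  show "summable d"
    using d by (intro summable_comparison_test[OF _ geometric]) auto
  have "norm (\<Sum>k. d k) \<le> (\<Sum>k. \<delta> * q ^ k)"
    using d by (intro norm_suminf_le geometric) auto
  also have "\<dots> = \<delta> / (1 - q)"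
    using assms by (simp add: suminf_mult suminf_geometric)
  finally show "\<bar>\<Sum>k. d k\<bar> \<le> \<delta> / (1 - q)" by simp
qed

lemma geometric_weighted_series:
  fixes d :: "nat \<Rightarrow> real"
  assumes "0 \<le> q" "q < 1" and d: "\<And>k. \<bar>d k\<bar> \<le> \<delta>"
  shows "summable (\<lambda>k. q ^ k * d k)" and "\<bar>\<Sum>k. q ^ k * d k\<bar> \<le> \<delta> / (1 - q)"
proof -
  have bound: "\<bar>q ^ k * d k\<bar> \<le> \<delta> * q ^ k" for k
    using mult_left_mono[OF d[of k], of "q ^ k"] assms(1) by (simp add: abs_mult mult.commute)
  show "summable (\<lambda>k. q ^ k * d k)"
    using geometric_dominated_series(1)[OF assms(1,2) bound] .
  show "\<bar>\<Sum>k. q ^ k * d k\<bar> \<le> \<delta> / (1 - q)"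
    using geometric_dominated_series(2)[OF assms(1,2) bound] .
qed

lemma abs_le_geometric_imp_zero:
  fixes d C \<theta> :: real
  assumes "0 \<le> \<theta>" "\<theta> < 1" "\<And>k. \<bar>d\<bar> \<le> C * \<theta> ^ k"
  shows "d = 0"
proof -
  have "(\<lambda>k. C * \<theta> ^ k) \<longlonglongrightarrow> 0"
    using assms by (intro tendsto_mult_right_zero LIMSEQ_power_zero) auto
  then have "\<bar>d\<bar> \<le> 0"
    by (rule LIMSEQ_le_const) (use assms(3) in auto)
  then show ?thesis by simp
qed

lemma geometric_steps_limit:
  fixes F :: "nat \<Rightarrow> 'a \<Rightarrow> real"
  assumes \<theta>: "0 \<le> \<theta>" "\<theta> < 1" and step: "\<And>k x. \<bar>F (Suc k) x - F k x\<bar> \<le> C * \<theta> ^ k"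
  shows "\<exists>f. \<forall>k x. \<bar>f x - F k x\<bar> \<le> C * \<theta> ^ k / (1 - \<theta>)"
proof -
  define d where "d x i = F (Suc i) x - F i x" for x i
  have summable_d: "summable (d x)" for x
    using step \<theta> by (intro geometric_dominated_series(1)[of \<theta>]) (auto simp: d_def)
  have F_partial_sum: "F k x = F 0 x + (\<Sum>i<k. d x i)" for k x
  proof (induction k)
    case (Suc k)
    then show ?case using d_def[of x k] by simp
  qed simp
  have "\<bar>(F 0 x + (\<Sum>i. d x i)) - F k x\<bar> \<le> C * \<theta> ^ k / (1 - \<theta>)" for k x
  proof -
    have "(F 0 x + (\<Sum>i. d x i)) - F k x = (\<Sum>i. d x (i + k))"
      using suminf_split_initial_segment[OF summable_d, of x k] F_partial_sum[of k x] by simp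
    also have "\<bar>\<dots>\<bar> \<le> C * \<theta> ^ k / (1 - \<theta>)"
    proof (rule geometric_dominated_series(2)[OF \<theta>])
      show "\<bar>d x (i + k)\<bar> \<le> C * \<theta> ^ k * \<theta> ^ i" for i
        using step[of "i + k" x] by (simp add: d_def power_add mult_ac)
    qed
    finally show ?thesis .
  qed
  then show ?thesis by (intro exI[of _ "\<lambda>x. F 0 x + (\<Sum>i. d x i)"]) simp
qed

lemma bounded_fixpoint_unique:
  fixes T :: "('a \<Rightarrow> real) \<Rightarrow> 'a \<Rightarrow> real" and \<theta> :: real
  assumes \<theta>: "0 \<le> \<theta>" "\<theta> < 1"
    and contraction: "\<And>f g \<delta> x. bounded (range f) \<Longrightarrow> bounded (range g) \<Longrightarrow>
          (\<And>x. \<bar>f x - g x\<bar> \<le> \<delta>) \<Longrightarrow> \<bar>T f x - T g x\<bar> \<le> \<theta> * \<delta>"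
    and f: "bounded (range f)" "T f = f" and g: "bounded (range g)" "T g = g"
  shows "f = g"
proof
  fix x
  obtain Mf Mg where Mf: "\<And>x. \<bar>f x\<bar> \<le> Mf" and Mg: "\<And>x. \<bar>g x\<bar> \<le> Mg"
    using f(1) g(1) by (auto simp: bounded_real)
  have "\<bar>f x - g x\<bar> \<le> (Mf + Mg) * \<theta> ^ k" for k
  proof (induction k arbitrary: x)
    case 0
    then show ?case using abs_triangle_ineq4[of "f x" "g x"] Mf[of x] Mg[of x] by simp
  next
    case (Suc k)
    then show ?case
      using contraction[OF f(1) g(1) Suc.IH] by (simp add: f(2) g(2) mult_ac)
  qed
  then show "f x = g x"
    using abs_le_geometric_imp_zero[OF \<theta>, of "f x - g x" "Mf + Mg"] by simp
qed

lemma ex1_bounded_fixpoint: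
  fixes T :: "('a \<Rightarrow> real) \<Rightarrow> 'a \<Rightarrow> real" and \<theta> :: real
  assumes \<theta>: "0 \<le> \<theta>" "\<theta> < 1" and bounded_T0: "bounded (range (T (\<lambda>_. 0)))"
    and contraction: "\<And>f g \<delta> x. bounded (range f) \<Longrightarrow> bounded (range g) \<Longrightarrow>
          (\<And>x. \<bar>f x - g x\<bar> \<le> \<delta>) \<Longrightarrow> \<bar>T f x - T g x\<bar> \<le> \<theta> * \<delta>"
  shows "\<exists>!f. bounded (range f) \<and> T f = f"
proof -
  obtain C where C: "\<And>x. \<bar>T (\<lambda>_. 0) x\<bar> \<le> C"
    using bounded_T0 by (auto simp: bounded_real)
  have bounded_T: "bounded (range (T f))" if f: "bounded (range f)" for f
  proof -
    obtain M where M: "\<And>x. \<bar>f x\<bar> \<le> M" using f by (auto simp: bounded_real)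
    have diff: "\<bar>T f x - T (\<lambda>_. 0) x\<bar> \<le> \<theta> * M" for x
      using M f by (intro contraction) auto
    have "\<bar>T f x\<bar> \<le> \<theta> * M + C" for x
      using diff[of x] C[of x] by linarith
    then show ?thesis by (auto simp: bounded_real)
  qed
  define F where "F k = (T ^^ k) (\<lambda>_. 0)" for k
  have F_Suc: "F (Suc k) = T (F k)" for k by (simp add: F_def)
  have bounded_F: "bounded (range (F k))" for k
    by (induction k) (auto simp: F_Suc bounded_T, simp add: F_def)
  have "\<bar>F (Suc k) x - F k x\<bar> \<le> C * \<theta> ^ k" for k x
  proof (induction k arbitrary: x)
    case 0
    then show ?case using C by (simp add: F_def)
  next
    case (Suc k)
    then show ?case
      using contraction[OF bounded_F bounded_F Suc.IH] by (simp add: F_Suc mult.left_commute)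
  qed
  then obtain f where f_close: "\<And>k x. \<bar>f x - F k x\<bar> \<le> C * \<theta> ^ k / (1 - \<theta>)"
    using geometric_steps_limit[OF \<theta>] by blast
  have bounded_f: "bounded (range f)"
    using f_close[of _ 0] by (auto simp: bounded_real F_def)
  have "T f x = f x" for x
  proof (rule abs_le_geometric_imp_zero[OF \<theta>, of _ "2 * C / (1 - \<theta>)", THEN eq_iff_diff_eq_0[THEN iffD2]])
    fix k
    define B where "B = C * \<theta> ^ k / (1 - \<theta>)"
    have "0 \<le> B" using \<theta> C[of undefined] by (simp add: B_def)
    then have "\<theta> * B \<le> B" using \<theta> by (simp add: mult_left_le_one_le)
    moreover have "\<bar>T f x - F (Suc k) x\<bar> \<le> \<theta> * B"
      unfolding F_Suc B_def using bounded_f bounded_F f_close by (intro contraction)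
    moreover have "\<bar>f x - F (Suc k) x\<bar> \<le> B"
      using f_close[of x "Suc k"] \<open>\<theta> * B \<le> B\<close> by (simp add: B_def mult_ac)
    ultimately have "\<bar>T f x - f x\<bar> \<le> 2 * B"
      by (simp only: abs_le_iff) linarith
    then show "\<bar>T f x - f x\<bar> \<le> 2 * C / (1 - \<theta>) * \<theta> ^ k"
      by (simp add: B_def)
  qed
  then have "T f = f" by auto
  then show ?thesis
    using bounded_f bounded_fixpoint_unique[of \<theta> T, OF \<theta> contraction] by blast
qed

section \<open>Power series with bounded coefficients\<close>

lemma summable_power_series_bounded:
  fixes c :: "nat \<Rightarrow> complex"
  assumes "bounded (range c)" "norm z < 1"
  shows "summable (\<lambda>n. c n * z ^ n)"
proof -
  obtain M where M: "\<And>n. norm (c n) \<le> M"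
    using assms(1) by (auto simp: bounded_iff)
  have "norm (c n * z ^ n) \<le> M * norm z ^ n" for n
    using M[of n] by (simp add: norm_mult norm_power mult_right_mono)
  then show ?thesis
    using assms(2)
    by (intro summable_comparison_test[OF _ summable_mult[OF summable_geometric[of "norm z"]]]) auto
qed

lemma has_field_derivative_power_series_bounded:
  fixes c :: "nat \<Rightarrow> complex"
  assumes "bounded (range c)" "norm z < 1"
  shows "((\<lambda>w. \<Sum>n. c n * w ^ n) has_field_derivative (\<Sum>n. diffs c n * z ^ n)) (at z)"
  by (rule termdiffs_strong'[of 1]) (use summable_power_series_bounded[OF assms(1)] assms(2) in auto)

lemma sums_of_nat_mult_power_series_bounded:
  fixes c :: "nat \<Rightarrow> complex"
  assumes "bounded (range c)" "norm z < 1"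
  shows "(\<lambda>n. of_nat n * c n * z ^ n) sums (z * deriv (\<lambda>w. \<Sum>n. c n * w ^ n) z)"
proof -
  have deriv: "deriv (\<lambda>w. \<Sum>n. c n * w ^ n) z = (\<Sum>n. diffs c n * z ^ n)"
    by (rule DERIV_imp_deriv[OF has_field_derivative_power_series_bounded[OF assms]])
  have "summable (\<lambda>n. diffs c n * z ^ n)"
    by (rule termdiff_converges[of z 1]) (use summable_power_series_bounded[OF assms(1)] assms(2) in auto)
  then have "(\<lambda>n. z * (diffs c n * z ^ n)) sums (z * (\<Sum>n. diffs c n * z ^ n))"
    by (intro sums_mult summable_sums)
  moreover have "z * (diffs c n * z ^ n) = of_nat (Suc n) * c (Suc n) * z ^ Suc n" for n
    by (simp add: diffs_def)
  ultimately show ?thesis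
    using sums_Suc_iff[of "\<lambda>n. of_nat n * c n * z ^ n"] by (simp add: deriv)
qed

lemma sums_weighted_power_series_bounded:
  fixes c :: "nat \<Rightarrow> complex"
  assumes "bounded (range c)" "norm z < 1"
  shows "(\<lambda>n. (of_nat n + w) * c n * z ^ n) sums
    (z * deriv (\<lambda>v. \<Sum>n. c n * v ^ n) z + w * (\<Sum>n. c n * z ^ n))"
proof -
  have "(\<lambda>n. of_nat n * c n * z ^ n + w * (c n * z ^ n)) sums
      (z * deriv (\<lambda>v. \<Sum>n. c n * v ^ n) z + w * (\<Sum>n. c n * z ^ n))"
    using assms
    by (intro sums_add sums_mult sums_of_nat_mult_power_series_bounded summable_sums
          summable_power_series_bounded)
  then show ?thesis by (simp add: algebra_simps)
qed

section \<open>Logarithms and limits along real paths\<close>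

lemma continuous_log_has_vector_derivative:
  fixes L w :: "real \<Rightarrow> complex"
  assumes "continuous_on S L" "open S" "t \<in> S" and exp_L: "\<And>x. x \<in> S \<Longrightarrow> exp (L x) = w x"
    and w': "(w has_vector_derivative w') (at t)"
  shows "(L has_vector_derivative w' / w t) (at t)"
proof -
  have wt: "w t \<noteq> 0" using exp_L[OF assms(3)] by (metis exp_not_eq_zero)
  have "isCont L t" using assms(1-3) continuous_on_eq_continuous_at by blast
  then obtain d where d: "d > 0" "\<And>x. dist x t < d \<Longrightarrow> dist (L x) (L t) < pi"
    unfolding continuous_at_eps_delta using pi_gt_zero by blast
  text \<open>Near \<open>t\<close> the branch \<open>L\<close> differs from \<open>L t\<close> by less than \<open>\<pi>\<close>, so it is \<open>L t\<close> plus the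
    principal logarithm of \<open>w / w t\<close>.\<close>
  have L_eq: "L t + Ln (w x / w t) = L x" if "x \<in> S \<inter> ball t d" for x
  proof -
    have "dist x t < d" using that by (simp add: dist_commute)
    then have "norm (L x - L t) < pi" using d(2) by (simp add: dist_norm)
    then have "\<bar>Im (L x - L t)\<bar> < pi" using abs_Im_le_cmod[of "L x - L t"] by linarith
    then have "Ln (exp (L x - L t)) = L x - L t"
      by (intro Ln_exp) (auto simp: abs_less_iff)
    moreover have "exp (L x - L t) = w x / w t" using exp_L that assms(3) by (simp add: exp_diff)
    ultimately show ?thesis by simp
  qed
  have "((\<lambda>v. L t + Ln v) has_field_derivative 1) (at (w t / w t))"
    using wt by (auto intro!: derivative_eq_intros simp: complex_nonpos_Reals_iff)
  from field_vector_diff_chain_at[OF has_vector_derivative_divide[OF w'] this]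
  have "((\<lambda>x. L t + Ln (w x / w t)) has_vector_derivative w' / w t) (at t)"
    by (simp add: o_def)
  then show ?thesis
    by (rule has_vector_derivative_transform_within_open[of _ _ _ "S \<inter> ball t d"])
       (use assms(2,3) d(1) L_eq in auto)
qed

lemma continuous_on_mult_vanishing_at_end:
  fixes f g :: "real \<Rightarrow> complex"
  assumes f: "continuous_on {a..<b} f" and f_bounded: "\<And>t. t \<in> {a..<b} \<Longrightarrow> norm (f t) \<le> M"
    and g: "continuous_on {a..b} g" and "g b = 0"
  shows "continuous_on {a..b} (\<lambda>t. g t * f t)"
  unfolding continuous_on_eq_continuous_within
proof
  fix x assume x: "x \<in> {a..b}"
  show "continuous (at x within {a..b}) (\<lambda>t. g t * f t)"
  proof (cases "x < b")
    case True
    have "at x within {a..b} = at x within {a..<b}"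
      by (rule at_within_nhd[of x "{..<b}"]) (use True in auto)
    moreover have "continuous_on {a..<b} (\<lambda>t. g t * f t)"
      by (intro continuous_intros f continuous_on_subset[OF g]) auto
    ultimately show ?thesis
      using x True by (simp add: continuous_on_eq_continuous_within)
  next
    case False
    with x have "x = b" by simp
    have "continuous (at b within {a..b}) g"
      using g x \<open>x = b\<close> by (simp add: continuous_on_eq_continuous_within)
    then have "(g \<longlongrightarrow> 0) (at b within {a..b})"
      using \<open>g b = 0\<close> by (simp add: continuous_within)
    then have "((\<lambda>t. norm (g t) * M) \<longlongrightarrow> 0) (at b within {a..b})"
      by (intro tendsto_mult_left_zero tendsto_norm_zero)
    moreover have "eventually (\<lambda>t. norm (g t * f t) \<le> norm (g t) * M) (at b within {a..b})"
      unfolding eventually_at_filter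
      by (intro always_eventually) (auto simp: norm_mult intro!: mult_left_mono f_bounded)
    ultimately have "((\<lambda>t. g t * f t) \<longlongrightarrow> 0) (at b within {a..b})"
      by (rule Lim_null_comparison[rotated])
    then show ?thesis
      using \<open>x = b\<close> \<open>g b = 0\<close> by (simp add: continuous_within)
  qed
qed

section \<open>The first-step operator\<close>

lemma abs_geometric_average_diff_le:
  fixes f g :: "nat \<Rightarrow> real"
  assumes "0 \<le> q" "q < 1" and "\<And>k. \<bar>f k\<bar> \<le> Mf" "\<And>k. \<bar>g k\<bar> \<le> Mg" and \<delta>: "\<And>k. \<bar>f k - g k\<bar> \<le> \<delta>"
  shows "\<bar>(\<Sum>k. (1 - q) * q ^ k * f k) - (\<Sum>k. (1 - q) * q ^ k * g k)\<bar> \<le> \<delta>"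
proof -
  have sf: "summable (\<lambda>k. q ^ k * f k)" and sg: "summable (\<lambda>k. q ^ k * g k)"
    using assms geometric_weighted_series(1)[of q f Mf] geometric_weighted_series(1)[of q g Mg] by auto
  have "(\<Sum>k. (1 - q) * q ^ k * f k) - (\<Sum>k. (1 - q) * q ^ k * g k)
      = (1 - q) * (\<Sum>k. q ^ k * f k) - (1 - q) * (\<Sum>k. q ^ k * g k)"
    unfolding suminf_mult[OF sf, symmetric] suminf_mult[OF sg, symmetric] by (simp add: mult.assoc)
  also have "\<dots> = (1 - q) * (\<Sum>k. q ^ k * (f k - g k))"
    using suminf_diff[OF sf sg] by (simp add: right_diff_distrib[symmetric])
  finally have "\<bar>(\<Sum>k. (1 - q) * q ^ k * f k) - (\<Sum>k. (1 - q) * q ^ k * g k)\<bar>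
      = (1 - q) * \<bar>\<Sum>k. q ^ k * (f k - g k)\<bar>"
    using assms by (simp add: abs_mult)
  also have "\<dots> \<le> (1 - q) * (\<delta> / (1 - q))"
    using assms geometric_weighted_series(2)[of q "\<lambda>k. f k - g k" \<delta>] by (intro mult_left_mono) auto
  finally show ?thesis using assms by simp
qed

definition ps_step_op :: "real \<Rightarrow> real \<Rightarrow> real \<Rightarrow> (nat \<Rightarrow> nat \<Rightarrow> real) \<Rightarrow> nat \<Rightarrow> nat \<Rightarrow> real" where
  "ps_step_op \<rho> q s f n b =
     (if b = 0 then 1
      else (\<rho> * (\<Sum>k. (1 - q) * q ^ k * f (n + k + 1) b)
            + real b / real (n + b) * f n (b - 1)
            + real n / real (n + b) * f (n - 1) b) / (s + \<rho> + 1))"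

lemma ps_first_step_iff_fixpoint:
  assumes "s + \<rho> + 1 \<noteq> 0"
  shows "ps_first_step \<rho> q s f \<longleftrightarrow> ps_step_op \<rho> q s f = f"
proof -
  define R where "R n b = \<rho> * (\<Sum>k. (1 - q) * q ^ k * f (n + k + 1) b)
    + real b / real (n + b) * f n (b - 1) + real n / real (n + b) * f (n - 1) b" for n b
  have "ps_step_op \<rho> q s f n b = (if b = 0 then 1 else R n b / (s + \<rho> + 1))" for n b
    unfolding ps_step_op_def R_def ..
  then have pointwise: "ps_step_op \<rho> q s f n b = f n b \<longleftrightarrow>
      (b = 0 \<longrightarrow> f n b = 1) \<and> (1 \<le> b \<longrightarrow> (s + \<rho> + 1) * f n b = R n b)" for n b
    using assms by (auto simp: divide_eq_eq mult.commute)
  show ?thesis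
    unfolding ps_first_step_def R_def[symmetric] fun_eq_iff pointwise
    by (metis le_numeral_extra(4) less_one not_le)
qed

lemma ps_step_op_contraction:
  assumes "\<rho> > 0" "0 \<le> q" "q < 1" "s > 0"
    and Mf: "\<And>n b. \<bar>f n b\<bar> \<le> Mf" and Mg: "\<And>n b. \<bar>g n b\<bar> \<le> Mg"
    and \<delta>: "\<And>n b. \<bar>f n b - g n b\<bar> \<le> \<delta>"
  shows "\<bar>ps_step_op \<rho> q s f n b - ps_step_op \<rho> q s g n b\<bar> \<le> (\<rho> + 1) / (s + \<rho> + 1) * \<delta>"
proof (cases "b = 0")
  case True
  have "0 \<le> \<delta>" using \<delta>[of 0 0] by linarith
  with True assms show ?thesis by (simp add: ps_step_op_def)
next
  case False
  define Sf where "Sf = (\<Sum>k. (1 - q) * q ^ k * f (n + k + 1) b)"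
  define Sg where "Sg = (\<Sum>k. (1 - q) * q ^ k * g (n + k + 1) b)"
  have "\<bar>Sf - Sg\<bar> \<le> \<delta>"
    unfolding Sf_def Sg_def using assms
    by (intro abs_geometric_average_diff_le[where Mf = Mf and Mg = Mg]) auto
  then have "\<bar>\<rho> * (Sf - Sg)\<bar> \<le> \<rho> * \<delta>"
    using assms by (simp add: abs_mult mult_left_mono)
  moreover define w1 where "w1 = real b / real (n + b)"
  moreover define w2 where "w2 = real n / real (n + b)"
  moreover have w: "w1 \<ge> 0" "w2 \<ge> 0" "w1 + w2 = 1"
    using False by (auto simp: w1_def w2_def add_divide_distrib[symmetric])
  moreover have "\<bar>w1 * (f n (b - 1) - g n (b - 1))\<bar> \<le> w1 * \<delta>" "\<bar>w2 * (f (n - 1) b - g (n - 1) b)\<bar> \<le> w2 * \<delta>"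
    using \<delta> w by (simp_all add: abs_mult mult_left_mono)
  ultimately have "\<bar>\<rho> * (Sf - Sg) + w1 * (f n (b - 1) - g n (b - 1)) + w2 * (f (n - 1) b - g (n - 1) b)\<bar>
      \<le> \<rho> * \<delta> + w1 * \<delta> + w2 * \<delta>"
    by (simp only: abs_le_iff) linarith
  also have "\<dots> = (\<rho> + (w1 + w2)) * \<delta>"
    by (simp add: algebra_simps)
  also have "\<dots> = (\<rho> + 1) * \<delta>"
    by (simp add: w(3))
  finally have numerator: "\<bar>\<rho> * (Sf - Sg) + w1 * (f n (b - 1) - g n (b - 1)) + w2 * (f (n - 1) b - g (n - 1) b)\<bar>
      \<le> (\<rho> + 1) * \<delta>" .
  have "ps_step_op \<rho> q s f n b = (\<rho> * Sf + w1 * f n (b - 1) + w2 * f (n - 1) b) / (s + \<rho> + 1)"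
       "ps_step_op \<rho> q s g n b = (\<rho> * Sg + w1 * g n (b - 1) + w2 * g (n - 1) b) / (s + \<rho> + 1)"
    using False by (simp_all add: ps_step_op_def Sf_def Sg_def w1_def w2_def)
  then have "ps_step_op \<rho> q s f n b - ps_step_op \<rho> q s g n b
      = (\<rho> * (Sf - Sg) + w1 * (f n (b - 1) - g n (b - 1)) + w2 * (f (n - 1) b - g (n - 1) b)) / (s + \<rho> + 1)"
    by (simp add: diff_divide_distrib[symmetric] algebra_simps)
  moreover have pos: "s + \<rho> + 1 > 0" using assms by simp
  ultimately have "\<bar>ps_step_op \<rho> q s f n b - ps_step_op \<rho> q s g n b\<bar>
      \<le> (\<rho> + 1) * \<delta> / (s + \<rho> + 1)"
    using numerator by (simp add: abs_divide divide_right_mono)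
  then show ?thesis by simp
qed

section \<open>The transforms \<open>e\<^sup>*\<close> and their generating functions\<close>

locale ps_queue =
  fixes \<rho> q s :: real
  assumes rho_pos: "\<rho> > 0" and q_pos: "0 < q" and q_less_1: "q < 1" and s_pos: "s > 0"
begin

lemma estar_bounded_solution: "ps_first_step \<rho> q s (estar \<rho> q s) \<and> (\<exists>M. \<forall>n b. \<bar>estar \<rho> q s n b\<bar> \<le> M)"
proof -
  let ?P = "\<lambda>f. ps_first_step \<rho> q s f \<and> (\<exists>M. \<forall>n b. \<bar>f n b\<bar> \<le> M)"
  define T where "T g = case_prod (ps_step_op \<rho> q s (curry g))" for g :: "nat \<times> nat \<Rightarrow> real"
  have "\<exists>!g. bounded (range g) \<and> T g = g"
  proof (rule ex1_bounded_fixpoint)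
    show "0 \<le> (\<rho> + 1) / (s + \<rho> + 1)" "(\<rho> + 1) / (s + \<rho> + 1) < 1"
      using rho_pos s_pos by auto
    have "\<bar>T (\<lambda>_. 0) x\<bar> \<le> 1" for x
      by (cases x) (simp add: T_def ps_step_op_def)
    then show "bounded (range (T (\<lambda>_. 0)))"
      by (auto simp: bounded_real)
  next
    fix g1 g2 :: "nat \<times> nat \<Rightarrow> real" and \<delta> x
    assume "bounded (range g1)" "bounded (range g2)" and \<delta>: "\<And>x. \<bar>g1 x - g2 x\<bar> \<le> \<delta>"
    then obtain M1 M2 where "\<And>x. \<bar>g1 x\<bar> \<le> M1" "\<And>x. \<bar>g2 x\<bar> \<le> M2"
      by (auto simp: bounded_real)
    moreover obtain n b :: nat where x: "x = (n, b)" by fastforce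
    ultimately have "\<bar>ps_step_op \<rho> q s (curry g1) n b - ps_step_op \<rho> q s (curry g2) n b\<bar>
        \<le> (\<rho> + 1) / (s + \<rho> + 1) * \<delta>"
      using rho_pos q_pos q_less_1 s_pos \<delta> by (intro ps_step_op_contraction) auto
    then show "\<bar>T g1 x - T g2 x\<bar> \<le> (\<rho> + 1) / (s + \<rho> + 1) * \<delta>"
      by (simp add: T_def x)
  qed
  then obtain g where g: "bounded (range g) \<and> T g = g"
    and g_unique: "\<And>g'. bounded (range g') \<and> T g' = g' \<Longrightarrow> g' = g"
    by (elim ex1E) blast
  have P_iff: "?P f \<longleftrightarrow> bounded (range (case_prod f)) \<and> T (case_prod f) = case_prod f" for f
    using ps_first_step_iff_fixpoint[of s \<rho> q f] rho_pos s_pos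
    by (auto simp: T_def bounded_real fun_eq_iff)
  have "\<exists>!f. ?P f"
  proof (rule ex1I[of _ "curry g"])
    show "?P (curry g)" using g P_iff[of "curry g"] by simp
  next
    fix f assume "?P f"
    then have "case_prod f = g" by (intro g_unique) (simp add: P_iff)
    then show "f = curry g" by auto
  qed
  then show ?thesis unfolding estar_def by (rule theI')
qed

lemma estar_first_step: "ps_first_step \<rho> q s (estar \<rho> q s)"
  using estar_bounded_solution by blast

lemma estar_bounded: "\<exists>M. \<forall>n b. \<bar>estar \<rho> q s n b\<bar> \<le> M"
  using estar_bounded_solution by blast

lemma bounded_estar_coeffs: "bounded (range (\<lambda>n. complex_of_real (estar \<rho> q s n b)))"
  using estar_bounded by (auto simp: bounded_iff)

lemma EE_sums: "norm z < 1 \<Longrightarrow> (\<lambda>n. complex_of_real (estar \<rho> q s n b) * z ^ n) sums EE \<rho> q s b z"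
  unfolding EE_def by (intro summable_sums summable_power_series_bounded bounded_estar_coeffs)

lemma EE_0: "norm z < 1 \<Longrightarrow> EE \<rho> q s 0 z = 1 / (1 - z)"
  using estar_first_step by (simp add: EE_def ps_first_step_def suminf_geometric)

definition Fcoeff :: "nat \<Rightarrow> nat \<Rightarrow> real" where
  "Fcoeff b n = (\<Sum>k. q ^ k * estar \<rho> q s (n + k + 1) b)"

definition Fseries :: "nat \<Rightarrow> complex \<Rightarrow> complex" where
  "Fseries b z = (\<Sum>n. complex_of_real (Fcoeff b n) * z ^ n)"

lemma summable_Fcoeff: "summable (\<lambda>k. q ^ k * estar \<rho> q s (n + k + 1) b)"
proof -
  obtain M where M: "\<forall>n b. \<bar>estar \<rho> q s n b\<bar> \<le> M" using estar_bounded by blast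
  then show ?thesis
    using q_pos q_less_1 by (intro geometric_weighted_series(1)[of q "\<lambda>k. estar \<rho> q s (n + k + 1) b" M]) auto
qed

lemma bounded_Fcoeff: "bounded (range (\<lambda>n. complex_of_real (Fcoeff b n)))"
proof -
  obtain M where M: "\<forall>n b. \<bar>estar \<rho> q s n b\<bar> \<le> M" using estar_bounded by blast
  have "\<bar>Fcoeff b n\<bar> \<le> M / (1 - q)" for n
    unfolding Fcoeff_def using M q_pos q_less_1
    by (intro geometric_weighted_series(2)[of q "\<lambda>k. estar \<rho> q s (n + k + 1) b" M]) auto
  then show ?thesis by (auto simp: bounded_iff)
qed

lemma Fseries_sums: "norm z < 1 \<Longrightarrow> (\<lambda>n. complex_of_real (Fcoeff b n) * z ^ n) sums Fseries b z"
  unfolding Fseries_def by (intro summable_sums summable_power_series_bounded bounded_Fcoeff)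

lemma Fcoeff_recurrence: "Fcoeff b n = estar \<rho> q s (n + 1) b + q * Fcoeff b (n + 1)"
proof -
  note summable = summable_Fcoeff[of _ b]
  have "Fcoeff b n = (\<Sum>k. q ^ Suc k * estar \<rho> q s (n + Suc k + 1) b) + estar \<rho> q s (n + 1) b"
    unfolding Fcoeff_def using suminf_split_head[OF summable[of n]] by simp
  also have "(\<Sum>k. q ^ Suc k * estar \<rho> q s (n + Suc k + 1) b) = q * Fcoeff b (n + 1)"
    unfolding Fcoeff_def using suminf_mult[OF summable[of "n + 1"], of q] by (simp add: mult.assoc)
  finally show ?thesis by simp
qed

lemma EE_minus_constant_term:
  assumes "norm z < 1"
  shows "EE \<rho> q s b z - estar \<rho> q s 0 b = (z - q) * Fseries b z + q * Fcoeff b 0"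
proof -
  have E: "(\<lambda>n. complex_of_real (estar \<rho> q s (Suc n) b) * z ^ Suc n) sums (EE \<rho> q s b z - estar \<rho> q s 0 b)"
    using EE_sums[OF assms] sums_Suc_iff[of "\<lambda>n. complex_of_real (estar \<rho> q s n b) * z ^ n"] by simp
  have F: "(\<lambda>n. complex_of_real (Fcoeff b (Suc n)) * z ^ Suc n) sums (Fseries b z - Fcoeff b 0)"
    using Fseries_sums[OF assms] sums_Suc_iff[of "\<lambda>n. complex_of_real (Fcoeff b n) * z ^ n"] by simp
  have "(\<lambda>n. z * (complex_of_real (Fcoeff b n) * z ^ n) - q * (complex_of_real (Fcoeff b (Suc n)) * z ^ Suc n))
      sums (z * Fseries b z - q * (Fseries b z - Fcoeff b 0))"
    by (intro sums_diff sums_mult Fseries_sums[OF assms] F)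
  moreover have "z * (complex_of_real (Fcoeff b n) * z ^ n) - q * (complex_of_real (Fcoeff b (Suc n)) * z ^ Suc n)
      = complex_of_real (estar \<rho> q s (Suc n) b) * z ^ Suc n" for n
    by (subst Fcoeff_recurrence) (simp add: algebra_simps)
  ultimately have "EE \<rho> q s b z - estar \<rho> q s 0 b = z * Fseries b z - q * (Fseries b z - Fcoeff b 0)"
    using sums_unique2[OF E] by simp
  then show ?thesis by (simp add: algebra_simps)
qed

lemma EE_eq_Fseries:
  assumes "norm z < 1"
  shows "EE \<rho> q s b z = EE \<rho> q s b q + (z - q) * Fseries b z"
proof -
  have "EE \<rho> q s b q - estar \<rho> q s 0 b = q * Fcoeff b 0"
    using EE_minus_constant_term[of q b] q_pos q_less_1 by simp
  with EE_minus_constant_term[OF assms, of b] show ?thesis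
    by (simp add: diff_eq_eq)
qed

lemma Fseries_has_field_derivative:
  assumes "norm z < 1"
  shows "(Fseries b has_field_derivative deriv (Fseries b) z) (at z)"
proof -
  have "(Fseries b has_field_derivative (\<Sum>n. diffs (\<lambda>n. complex_of_real (Fcoeff b n)) n * z ^ n)) (at z)"
    unfolding Fseries_def[abs_def] by (rule has_field_derivative_power_series_bounded[OF bounded_Fcoeff assms])
  moreover from this have "deriv (Fseries b) z = (\<Sum>n. diffs (\<lambda>n. complex_of_real (Fcoeff b n)) n * z ^ n)"
    by (rule DERIV_imp_deriv)
  ultimately show ?thesis by simp
qed

lemma continuous_on_Fseries: "continuous_on (ball 0 1) (Fseries b)"
  using Fseries_has_field_derivative
  by (intro DERIV_continuous_on[of _ _ "deriv (Fseries b)"]) (auto intro: has_field_derivative_at_within)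

lemma deriv_EE:
  assumes "norm z < 1"
  shows "deriv (EE \<rho> q s b) z = Fseries b z + (z - q) * deriv (Fseries b) z"
proof (rule DERIV_imp_deriv)
  have "((\<lambda>w. EE \<rho> q s b q + (w - q) * Fseries b w) has_field_derivative
      Fseries b z + (z - q) * deriv (Fseries b) z) (at z)"
    by (auto intro!: derivative_eq_intros Fseries_has_field_derivative[OF assms])
  then show "(EE \<rho> q s b has_field_derivative Fseries b z + (z - q) * deriv (Fseries b) z) (at z)"
    by (rule has_field_derivative_transform_within_open[of _ _ _ "ball 0 1"])
       (use assms EE_eq_Fseries in auto)
qed

lemma FF_eq_Fseries: "norm z < 1 \<Longrightarrow> FF \<rho> q s b z = Fseries b z"
  by (auto simp: FF_def deriv_EE EE_eq_Fseries)

lemma EE_eq_power_series: "EE \<rho> q s b = (\<lambda>w. \<Sum>n. complex_of_real (estar \<rho> q s n b) * w ^ n)"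
  by (simp add: fun_eq_iff EE_def)

lemma first_step_coeffs:
  assumes "1 \<le> b"
  shows "(s + \<rho> + 1) * real (n + b) * estar \<rho> q s n b
    = \<rho> * (1 - q) * real (n + b) * Fcoeff b n + real b * estar \<rho> q s n (b - 1)
      + real n * estar \<rho> q s (n - 1) b"
proof -
  have tail: "(\<Sum>k. (1 - q) * q ^ k * estar \<rho> q s (n + k + 1) b) = (1 - q) * Fcoeff b n"
    unfolding Fcoeff_def mult.assoc by (rule suminf_mult[OF summable_Fcoeff])
  define N where "N = real (n + b)"
  have "(s + \<rho> + 1) * estar \<rho> q s n b = \<rho> * (\<Sum>k. (1 - q) * q ^ k * estar \<rho> q s (n + k + 1) b)
      + real b / real (n + b) * estar \<rho> q s n (b - 1) + real n / real (n + b) * estar \<rho> q s (n - 1) b"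
    using estar_first_step assms unfolding ps_first_step_def by blast
  then have step: "(s + \<rho> + 1) * estar \<rho> q s n b = \<rho> * ((1 - q) * Fcoeff b n)
      + real b / N * estar \<rho> q s n (b - 1) + real n / N * estar \<rho> q s (n - 1) b"
    unfolding tail N_def .
  have "N \<noteq> 0" using assms by (simp add: N_def)
  then have "N * ((s + \<rho> + 1) * estar \<rho> q s n b)
      = \<rho> * (1 - q) * N * Fcoeff b n + real b * estar \<rho> q s n (b - 1) + real n * estar \<rho> q s (n - 1) b"
    unfolding step by (simp add: distrib_left mult_ac)
  then show ?thesis by (simp add: N_def mult_ac)
qed

lemma EE_weighted_sums:
  "norm z < 1 \<Longrightarrow> (\<lambda>n. (of_nat n + w) * complex_of_real (estar \<rho> q s n b) * z ^ n) sums
    (z * deriv (EE \<rho> q s b) z + w * EE \<rho> q s b z)"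
  using sums_weighted_power_series_bounded[OF bounded_estar_coeffs] by (simp add: EE_eq_power_series)

lemma EE_shifted_sums:
  assumes "norm z < 1"
  shows "(\<lambda>n. of_nat n * complex_of_real (estar \<rho> q s (n - 1) b) * z ^ n) sums
    (z * (z * deriv (EE \<rho> q s b) z + EE \<rho> q s b z))"
proof -
  have "(\<lambda>n. z * ((of_nat n + 1) * complex_of_real (estar \<rho> q s n b) * z ^ n)) sums
      (z * (z * deriv (EE \<rho> q s b) z + EE \<rho> q s b z))"
    using EE_weighted_sums[OF assms, of 1] by (intro sums_mult) simp
  then show ?thesis
    using sums_Suc_iff[of "\<lambda>n. of_nat n * complex_of_real (estar \<rho> q s (n - 1) b) * z ^ n"]
    by (simp add: algebra_simps)
qed

lemma generating_function_equation:
  assumes "1 \<le> b" "norm z < 1"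
  shows "complex_of_real (s + \<rho> + 1) * (z * deriv (EE \<rho> q s b) z + of_nat b * EE \<rho> q s b z)
    = complex_of_real (\<rho> * (1 - q)) * (z * deriv (Fseries b) z + of_nat b * Fseries b z)
      + of_nat b * EE \<rho> q s (b - 1) z + z * (z * deriv (EE \<rho> q s b) z + EE \<rho> q s b z)"
proof -
  define e where "e b' n = complex_of_real (estar \<rho> q s n b')" for b' n
  define f where "f n = complex_of_real (Fcoeff b n)" for n
  have "(\<lambda>n. complex_of_real (s + \<rho> + 1) * ((of_nat n + of_nat b) * e b n * z ^ n)) sums
      (complex_of_real (s + \<rho> + 1) * (z * deriv (EE \<rho> q s b) z + of_nat b * EE \<rho> q s b z))"
    using EE_weighted_sums[OF assms(2)] by (intro sums_mult) (simp add: e_def)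
  moreover have "(\<lambda>n. complex_of_real (s + \<rho> + 1) * ((of_nat n + of_nat b) * e b n * z ^ n))
    = (\<lambda>n. complex_of_real (\<rho> * (1 - q)) * ((of_nat n + of_nat b) * f n * z ^ n)
         + of_nat b * (e (b - 1) n * z ^ n) + of_nat n * e b (n - 1) * z ^ n)"
  proof
    fix n
    have "complex_of_real ((s + \<rho> + 1) * real (n + b) * estar \<rho> q s n b)
      = complex_of_real (\<rho> * (1 - q) * real (n + b) * Fcoeff b n + real b * estar \<rho> q s n (b - 1)
          + real n * estar \<rho> q s (n - 1) b)"
      using first_step_coeffs[OF assms(1)] by simp
    then have "complex_of_real (s + \<rho> + 1) * ((of_nat n + of_nat b) * e b n)
      = complex_of_real (\<rho> * (1 - q)) * ((of_nat n + of_nat b) * f n)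
         + of_nat b * e (b - 1) n + of_nat n * e b (n - 1)"
      by (simp add: e_def f_def algebra_simps)
    from arg_cong[OF this, of "\<lambda>x. x * z ^ n"]
    show "complex_of_real (s + \<rho> + 1) * ((of_nat n + of_nat b) * e b n * z ^ n)
      = complex_of_real (\<rho> * (1 - q)) * ((of_nat n + of_nat b) * f n * z ^ n)
         + of_nat b * (e (b - 1) n * z ^ n) + of_nat n * e b (n - 1) * z ^ n"
      by (simp add: algebra_simps)
  qed
  moreover have "(\<lambda>n. (of_nat n + of_nat b) * f n * z ^ n) sums
      (z * deriv (Fseries b) z + of_nat b * Fseries b z)"
    using sums_weighted_power_series_bounded[OF bounded_Fcoeff assms(2)]
    by (simp add: f_def Fseries_def[abs_def])
  then have "(\<lambda>n. complex_of_real (\<rho> * (1 - q)) * ((of_nat n + of_nat b) * f n * z ^ n)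
         + of_nat b * (e (b - 1) n * z ^ n) + of_nat n * e b (n - 1) * z ^ n) sums
      (complex_of_real (\<rho> * (1 - q)) * (z * deriv (Fseries b) z + of_nat b * Fseries b z)
        + of_nat b * EE \<rho> q s (b - 1) z + z * (z * deriv (EE \<rho> q s b) z + EE \<rho> q s b z))"
    using EE_sums[OF assms(2)] EE_shifted_sums[OF assms(2)]
    by (intro sums_add sums_mult) (simp_all add: e_def)
  ultimately show ?thesis by (simp add: sums_iff)
qed

definition forcing :: "nat \<Rightarrow> complex \<Rightarrow> complex" where
  "forcing b z = of_nat b * EE \<rho> q s (b - 1) z
     - (complex_of_real (real b * (1 + \<rho> + s)) - z) * EE \<rho> q s b (complex_of_real q)"

lemma forcing_cases:
  assumes "1 \<le> b" "norm z < 1"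
  shows "(if b = 1 then 1 / (1 - z) else 0) + (if b \<ge> 2 then of_nat b * EE \<rho> q s (b - 1) z else 0)
      - (complex_of_real (real b * (1 + \<rho> + s)) - z) * EE \<rho> q s b (complex_of_real q) = forcing b z"
  using assms by (cases "b = 1") (auto simp: forcing_def EE_0)

lemma PP_has_field_derivative:
  "(PP \<rho> q s has_field_derivative 2 * z - complex_of_real (s + 1 + \<rho> + q)) (at z)"
  unfolding PP_def[abs_def] by (auto intro!: derivative_eq_intros)

lemma Fseries_ode:
  fixes z :: complex
  assumes "1 \<le> b" "norm z < 1"
  shows "z * PP \<rho> q s z * deriv (Fseries b) z
    = - ((of_nat b * PP \<rho> q s z + z * (2 * z - complex_of_real (s + 1 + \<rho> + q))
          + of_nat b * z * (q - z)) * Fseries b z + forcing b z)"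
proof -
  define S R Q B where "S = complex_of_real s" and "R = complex_of_real \<rho>"
    and "Q = complex_of_real q" and "B = (of_nat b :: complex)"
  define E E' E1 Eq F F' where "E = EE \<rho> q s b z" and "E' = deriv (EE \<rho> q s b) z"
    and "E1 = EE \<rho> q s (b - 1) z" and "Eq = EE \<rho> q s b Q"
    and "F = Fseries b z" and "F' = deriv (Fseries b) z"
  have "E = Eq + (z - Q) * F" "E' = F + (z - Q) * F'"
    using EE_eq_Fseries[OF assms(2)] deriv_EE[OF assms(2)]
    by (simp_all add: E_def E'_def Eq_def F_def F'_def Q_def)
  moreover have "(S + R + 1) * (z * E' + B * E) = R * (1 - Q) * (z * F' + B * F) + B * E1 + z * (z * E' + E)"
    using generating_function_equation[OF assms]
    by (simp add: S_def R_def Q_def B_def E_def E'_def E1_def F_def F'_def)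
  ultimately have "z * (z\<^sup>2 - (S + 1 + R + Q) * z + (S * Q + R + Q)) * F'
    = - ((B * (z\<^sup>2 - (S + 1 + R + Q) * z + (S * Q + R + Q)) + z * (2 * z - (S + 1 + R + Q))
          + B * z * (Q - z)) * F + (B * E1 - (B * (1 + R + S) - z) * Eq))"
    by algebra
  then show ?thesis
    by (simp add: PP_def forcing_def S_def R_def Q_def B_def E1_def Eq_def F_def F'_def)
qed

lemma weighted_Fseries_has_field_derivative:
  fixes z :: complex
  assumes "1 \<le> b" "norm z < 1"
  shows "((\<lambda>w. w ^ b * PP \<rho> q s w * Fseries b w) has_field_derivative
      - (z ^ (b - 1) * (forcing b z + of_nat b * z * (complex_of_real q - z) * Fseries b z))) (at z)"
proof -
  have deriv: "((\<lambda>w. w ^ b * PP \<rho> q s w * Fseries b w) has_field_derivative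
      z ^ b * PP \<rho> q s z * deriv (Fseries b) z + (z ^ b * (2 * z - complex_of_real (s + 1 + \<rho> + q))
        + of_nat b * z ^ (b - 1) * PP \<rho> q s z) * Fseries b z) (at z)"
    by (intro DERIV_mult' DERIV_power[OF DERIV_ident, THEN DERIV_cong] PP_has_field_derivative
          Fseries_has_field_derivative assms(2)) simp
  define w where "w = z ^ (b - 1)"
  have "z ^ b = z * w"
    using assms(1) by (simp add: w_def power_eq_if)
  then have "z ^ b * PP \<rho> q s z * deriv (Fseries b) z + (z ^ b * (2 * z - complex_of_real (s + 1 + \<rho> + q))
        + of_nat b * z ^ (b - 1) * PP \<rho> q s z) * Fseries b z
      = w * (z * PP \<rho> q s z * deriv (Fseries b) z) + w * (z * (2 * z - complex_of_real (s + 1 + \<rho> + q))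
        + of_nat b * PP \<rho> q s z) * Fseries b z"
    by (simp add: w_def algebra_simps)
  also have "\<dots> = - (w * (forcing b z + of_nat b * z * (complex_of_real q - z) * Fseries b z))"
    unfolding Fseries_ode[OF assms] by (simp add: algebra_simps)
  finally have "z ^ b * PP \<rho> q s z * deriv (Fseries b) z + (z ^ b * (2 * z - complex_of_real (s + 1 + \<rho> + q))
        + of_nat b * z ^ (b - 1) * PP \<rho> q s z) * Fseries b z
      = - (z ^ (b - 1) * (forcing b z + of_nat b * z * (complex_of_real q - z) * Fseries b z))"
    unfolding w_def .
  from DERIV_cong[OF deriv this] show ?thesis .
qed

subsection \<open>The roots of \<open>P\<close> and the exponents of \<open>R\<close>\<close>

lemma roots_bounds: "q < Um \<rho> q s" "Um \<rho> q s < 1" "1 < Up \<rho> q s"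
  and roots_sum_product: "Um \<rho> q s + Up \<rho> q s = s + 1 + \<rho> + q" "Um \<rho> q s * Up \<rho> q s = s * q + \<rho> + q"
proof -
  define B0 where "B0 = s + 1 + \<rho> + q"
  define D where "D = B0\<^sup>2 - 4 * (s * q + \<rho> + q)"
  have um: "Um \<rho> q s = (B0 - sqrt D) / 2" and up: "Up \<rho> q s = (B0 + sqrt D) / 2"
    by (simp_all add: Um_def Up_def B0_def D_def)
  have "D - (2 - B0)\<^sup>2 = 4 * s * (1 - q)" "(B0 - 2 * q)\<^sup>2 - D = 4 * \<rho> * (1 - q)"
    by (simp_all add: D_def B0_def power2_eq_square algebra_simps)
  then have D_gt: "(2 - B0)\<^sup>2 < D" and D_lt: "D < (B0 - 2 * q)\<^sup>2"
    using s_pos rho_pos q_less_1 by (smt (verit) mult_pos_pos)+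
  have D_nonneg: "D \<ge> 0" using D_gt by (smt (verit) zero_le_power2)
  have sqrt_gt: "\<bar>2 - B0\<bar> < sqrt D" using D_gt by (intro real_less_rsqrt) simp
  have "B0 - 2 * q > 0" using q_less_1 s_pos rho_pos by (simp add: B0_def)
  then have sqrt_lt: "sqrt D < B0 - 2 * q"
    using D_lt D_nonneg by (metis abs_of_pos real_sqrt_abs real_sqrt_less_iff)
  show "q < Um \<rho> q s" "Um \<rho> q s < 1" "1 < Up \<rho> q s"
    using sqrt_gt sqrt_lt by (auto simp: um up)
  show "Um \<rho> q s + Up \<rho> q s = s + 1 + \<rho> + q" by (simp add: um up B0_def field_simps)
  have "Um \<rho> q s * Up \<rho> q s = (B0\<^sup>2 - (sqrt D)\<^sup>2) / 4"
    by (simp add: um up power2_eq_square algebra_simps)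
  then show "Um \<rho> q s * Up \<rho> q s = s * q + \<rho> + q"
    using D_nonneg by (simp add: D_def)
qed

lemma PP_factor: "PP \<rho> q s z = (z - Um \<rho> q s) * (z - Up \<rho> q s)"
proof -
  have "complex_of_real (s + 1 + \<rho> + q) = Um \<rho> q s + Up \<rho> q s"
    "complex_of_real (s * q + \<rho> + q) = Um \<rho> q s * Up \<rho> q s"
    by (simp_all only: roots_sum_product of_real_add of_real_mult)
  then show ?thesis by (simp add: PP_def algebra_simps power2_eq_square)
qed

lemma Cminus_minus_1: "Cminus \<rho> q s - 1 = (Um \<rho> q s - q) / (Up \<rho> q s - Um \<rho> q s)"
  and Cplus_minus_1: "Cplus \<rho> q s - 1 = (q - Up \<rho> q s) / (Up \<rho> q s - Um \<rho> q s)"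
proof -
  have "Up \<rho> q s - Um \<rho> q s \<noteq> 0" using roots_bounds by simp
  then show "Cminus \<rho> q s - 1 = (Um \<rho> q s - q) / (Up \<rho> q s - Um \<rho> q s)"
    and "Cplus \<rho> q s - 1 = (q - Up \<rho> q s) / (Up \<rho> q s - Um \<rho> q s)"
    by (simp_all add: Cminus_def Cplus_def field_simps)
qed

lemma exponent_signs: "Cminus \<rho> q s - 1 > 0" "Cplus \<rho> q s - 1 < 0"
  using roots_bounds by (simp_all add: Cminus_minus_1 Cplus_minus_1 divide_neg_pos)

text \<open>The logarithmic derivative of \<open>R\<close> is \<open>(q - z) / P(z)\<close>.\<close>
lemma exponent_partial_fractions:
  fixes z :: complex
  assumes "z \<noteq> Um \<rho> q s" "z \<noteq> Up \<rho> q s"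
  shows "complex_of_real (Cminus \<rho> q s - 1) / (z - Um \<rho> q s)
      + complex_of_real (Cplus \<rho> q s - 1) / (z - Up \<rho> q s) = (q - z) / PP \<rho> q s z"
proof -
  define a c where "a = complex_of_real (Um \<rho> q s)" and "c = complex_of_real (Up \<rho> q s)"
  have Cm: "complex_of_real (Cminus \<rho> q s - 1) = (a - q) / (c - a)"
    and Cp: "complex_of_real (Cplus \<rho> q s - 1) = (q - c) / (c - a)"
    by (simp_all add: Cminus_minus_1 Cplus_minus_1 a_def c_def)
  define A C D where "A = z - a" and "C = z - c" and "D = c - a"
  have "D \<noteq> 0" "A \<noteq> 0" "C \<noteq> 0"
    using assms roots_bounds by (simp_all add: A_def C_def D_def a_def c_def)
  then have "(a - q) / D / A + (q - c) / D / C = (q - z) / (A * C)"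
    by (simp add: field_simps) (simp add: A_def C_def D_def algebra_simps)
  then show ?thesis
    unfolding Cm Cp PP_factor a_def[symmetric] c_def[symmetric] A_def C_def D_def by simp
qed

end

section \<open>Integration along the path\<close>

locale ps_path = ps_queue +
  fixes \<gamma> L :: "real \<Rightarrow> complex"
  assumes path_valid: "valid_path \<gamma>" and path_in_disc: "path_image \<gamma> \<subseteq> ball 0 1"
    and path_end: "pathfinish \<gamma> = complex_of_real (Um \<rho> q s)"
    and L_continuous: "continuous_on {0..<1} L"
    and L_log: "\<forall>t\<in>{0..<1}. exp (L t) = 1 - \<gamma> t / complex_of_real (Um \<rho> q s)"
begin

lemma continuous_on_path: "continuous_on {0..1} \<gamma>"
  using path_valid valid_path_imp_path path_def by blast

lemma norm_path_less_1: "t \<in> {0..1} \<Longrightarrow> norm (\<gamma> t) < 1"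
  using path_in_disc unfolding path_image_def image_subset_iff by simp

lemma path_ne_Um: "t \<in> {0..<1} \<Longrightarrow> \<gamma> t \<noteq> Um \<rho> q s"
  using L_log roots_bounds q_pos by (metis divide_self exp_not_eq_zero less_trans of_real_eq_0_iff
      order_less_irrefl right_minus_eq)

lemma path_ne_Up: "t \<in> {0..1} \<Longrightarrow> \<gamma> t \<noteq> Up \<rho> q s"
  using norm_path_less_1 roots_bounds by fastforce

lemma one_minus_path_div_Up_nonpos_Reals: "t \<in> {0..1} \<Longrightarrow> 1 - \<gamma> t / Up \<rho> q s \<notin> \<real>\<^sub>\<le>\<^sub>0"
proof -
  assume "t \<in> {0..1}"
  then have "Re (\<gamma> t) < Up \<rho> q s"
    using norm_path_less_1 abs_Re_le_cmod[of "\<gamma> t"] roots_bounds by fastforce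
  then have "Re (1 - \<gamma> t / Up \<rho> q s) > 0"
    using roots_bounds by (simp add: field_simps)
  then show ?thesis by (simp add: complex_nonpos_Reals_iff)
qed

lemma L_has_vector_derivative:
  assumes t: "t \<in> {0<..<1}" and \<gamma>': "(\<gamma> has_vector_derivative \<gamma>') (at t)"
  shows "(L has_vector_derivative \<gamma>' / (\<gamma> t - Um \<rho> q s)) (at t)"
proof -
  define um where "um = complex_of_real (Um \<rho> q s)"
  have "um \<noteq> 0" using roots_bounds q_pos by (simp add: um_def)
  have "\<gamma> t \<noteq> um" using path_ne_Um t by (simp add: um_def)
  have "((\<lambda>t. 1 - \<gamma> t / um) has_vector_derivative - (\<gamma>' / um)) (at t)"
    using \<gamma>' by (auto intro!: derivative_eq_intros)
  moreover have "continuous_on {0<..<1} L"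
    by (rule continuous_on_subset[OF L_continuous]) auto
  ultimately have "(L has_vector_derivative - (\<gamma>' / um) / (1 - \<gamma> t / um)) (at t)"
    using L_log t by (intro continuous_log_has_vector_derivative[of "{0<..<1}"]) (auto simp: um_def)
  moreover have "- (\<gamma>' / um) / (1 - \<gamma> t / um) = \<gamma>' / (\<gamma> t - um)"
    using \<open>um \<noteq> 0\<close> \<open>\<gamma> t \<noteq> um\<close> by (simp add: field_simps)
  ultimately show ?thesis by (simp add: um_def)
qed

lemma Ln_path_Up_has_vector_derivative:
  assumes t: "t \<in> {0..1}" and \<gamma>': "(\<gamma> has_vector_derivative \<gamma>') (at t)"
  shows "((\<lambda>t. Ln (1 - \<gamma> t / Up \<rho> q s)) has_vector_derivative \<gamma>' / (\<gamma> t - Up \<rho> q s)) (at t)"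
proof -
  have "((\<lambda>v. Ln (1 - v / Up \<rho> q s)) has_field_derivative 1 / (\<gamma> t - Up \<rho> q s)) (at (\<gamma> t))"
    using one_minus_path_div_Up_nonpos_Reals[OF t] path_ne_Up[OF t] roots_bounds
    by (auto intro!: derivative_eq_intros simp: field_simps)
  from field_vector_diff_chain_at[OF \<gamma>' this] show ?thesis
    by (simp add: o_def)
qed

lemma Rratio_pow_has_vector_derivative:
  assumes t: "t \<in> {0<..<1}" and \<gamma>': "(\<gamma> has_vector_derivative \<gamma>') (at t)"
  shows "(Rratio_pow \<rho> q s b \<gamma> L has_vector_derivative
      of_nat b * \<gamma>' * (q - \<gamma> t) / PP \<rho> q s (\<gamma> t) * Rratio_pow \<rho> q s b \<gamma> L t) (at t)"
proof -
  define um up where "um = complex_of_real (Um \<rho> q s)" and "up = complex_of_real (Up \<rho> q s)"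
  define X where "X t' = of_nat b * (complex_of_real (Cminus \<rho> q s - 1) * (L t' - L 0)
      + complex_of_real (Cplus \<rho> q s - 1) * (Ln (1 - \<gamma> t' / up) - Ln (1 - \<gamma> 0 / up)))" for t'
  have "t \<in> {0..1}" using t by auto
  have dX: "(X has_vector_derivative of_nat b * (complex_of_real (Cminus \<rho> q s - 1) * (\<gamma>' / (\<gamma> t - um))
      + complex_of_real (Cplus \<rho> q s - 1) * (\<gamma>' / (\<gamma> t - up)))) (at t)"
    unfolding X_def um_def up_def
    by (auto intro!: derivative_eq_intros L_has_vector_derivative[OF t \<gamma>']
        Ln_path_Up_has_vector_derivative[OF \<open>t \<in> {0..1}\<close> \<gamma>'])
  have "of_nat b * (complex_of_real (Cminus \<rho> q s - 1) * (\<gamma>' / (\<gamma> t - um))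
      + complex_of_real (Cplus \<rho> q s - 1) * (\<gamma>' / (\<gamma> t - up)))
    = of_nat b * \<gamma>' * (complex_of_real (Cminus \<rho> q s - 1) / (\<gamma> t - um)
      + complex_of_real (Cplus \<rho> q s - 1) / (\<gamma> t - up))"
    by (simp add: distrib_left mult_ac)
  also have "\<dots> = of_nat b * \<gamma>' * (q - \<gamma> t) / PP \<rho> q s (\<gamma> t)"
    using exponent_partial_fractions path_ne_Um path_ne_Up t by (simp add: um_def up_def)
  finally have "((exp \<circ> X) has_vector_derivative
      of_nat b * \<gamma>' * (q - \<gamma> t) / PP \<rho> q s (\<gamma> t) * exp (X t)) (at t)"
    using field_vector_diff_chain_at[OF dX DERIV_exp] by (simp only:)
  moreover have "Rratio_pow \<rho> q s b \<gamma> L = exp \<circ> X"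
    by (simp add: fun_eq_iff Rratio_pow_def X_def up_def)
  ultimately show ?thesis by simp
qed

lemma continuous_on_Rratio_pow: "continuous_on {0..<1} (Rratio_pow \<rho> q s b \<gamma> L)"
proof -
  have "continuous_on {0..<1} \<gamma>" by (rule continuous_on_subset[OF continuous_on_path]) auto
  then show ?thesis
    unfolding Rratio_pow_def using one_minus_path_div_Up_nonpos_Reals roots_bounds
    by (intro continuous_intros L_continuous) auto
qed

lemma Re_L_le: "t \<in> {0..<1} \<Longrightarrow> Re (L t) \<le> ln (1 + 1 / Um \<rho> q s)"
proof -
  assume t: "t \<in> {0..<1}"
  define um where "um = Um \<rho> q s"
  have um: "0 < um" using roots_bounds q_pos by (simp add: um_def)
  have "norm (1 - \<gamma> t / um) \<le> 1 + norm (\<gamma> t) / um"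
    using norm_triangle_ineq4[of 1 "\<gamma> t / um"] um by (simp add: norm_divide)
  also have "\<dots> \<le> 1 + 1 / um"
    using norm_path_less_1[of t] t um by (simp add: divide_right_mono)
  finally have "norm (exp (L t)) \<le> 1 + 1 / um"
    using L_log t by (simp add: um_def)
  moreover have "0 < 1 + 1 / um" using um by (simp add: add_pos_pos)
  ultimately show ?thesis
    by (simp add: ln_ge_iff um_def)
qed

lemma Re_Ln_path_Up_ge: "t \<in> {0..1} \<Longrightarrow> ln (1 - 1 / Up \<rho> q s) \<le> Re (Ln (1 - \<gamma> t / Up \<rho> q s))"
proof -
  assume t: "t \<in> {0..1}"
  define up where "up = Up \<rho> q s"
  have up: "1 < up" using roots_bounds by (simp add: up_def)
  have "1 - 1 / up \<le> 1 - norm (\<gamma> t) / up"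
    using norm_path_less_1[OF t] up by (simp add: divide_right_mono)
  also have "\<dots> \<le> norm (1 - \<gamma> t / up)"
    using norm_triangle_ineq2[of 1 "\<gamma> t / up"] up by (simp add: norm_divide)
  finally have "ln (1 - 1 / up) \<le> ln (norm (1 - \<gamma> t / up))"
    using up by (intro ln_mono) auto
  also have "\<dots> = Re (Ln (1 - \<gamma> t / up))"
    using one_minus_path_div_Up_nonpos_Reals[OF t]
    by (intro Re_Ln[symmetric]) (auto simp: up_def complex_nonpos_Reals_iff)
  finally show ?thesis by (simp add: up_def)
qed

text \<open>The exponent of \<open>1 - z/U\<^sup>-\<close> in \<open>R\<close> is positive and that of \<open>1 - z/U\<^sup>+\<close> negative, so the
  bounds above bound \<open>|R(\<gamma> t)/R(u)|\<close>.\<close>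
lemma Rratio_pow_bounded: "\<exists>M. \<forall>t\<in>{0..<1}. norm (Rratio_pow \<rho> q s b \<gamma> L t) \<le> M"
proof -
  define Lp where "Lp t = Ln (1 - \<gamma> t / Up \<rho> q s)" for t
  define ME where "ME = real b * ((Cminus \<rho> q s - 1) * (ln (1 + 1 / Um \<rho> q s) - Re (L 0))
        + (Cplus \<rho> q s - 1) * (ln (1 - 1 / Up \<rho> q s) - Re (Lp 0)))"
  have "Re (of_nat b * (complex_of_real (Cminus \<rho> q s - 1) * (L t - L 0)
        + complex_of_real (Cplus \<rho> q s - 1) * (Lp t - Lp 0))) \<le> ME" if t: "t \<in> {0..<1}" for t
  proof -
    have "(Cminus \<rho> q s - 1) * (Re (L t) - Re (L 0))
        \<le> (Cminus \<rho> q s - 1) * (ln (1 + 1 / Um \<rho> q s) - Re (L 0))"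
      using exponent_signs(1) Re_L_le[OF t] by (intro mult_left_mono) auto
    moreover have "(Cplus \<rho> q s - 1) * (Re (Lp t) - Re (Lp 0))
        \<le> (Cplus \<rho> q s - 1) * (ln (1 - 1 / Up \<rho> q s) - Re (Lp 0))"
      using exponent_signs(2) Re_Ln_path_Up_ge[of t] t
      by (intro mult_left_mono_neg) (auto simp: Lp_def)
    ultimately show ?thesis by (simp add: ME_def mult_left_mono)
  qed
  then show ?thesis
    by (intro exI[of _ "exp ME"]) (simp add: Rratio_pow_def Lp_def)
qed

definition Phi :: "nat \<Rightarrow> real \<Rightarrow> complex" where
  "Phi b t = \<gamma> t ^ b * PP \<rho> q s (\<gamma> t) * Fseries b (\<gamma> t) * Rratio_pow \<rho> q s b \<gamma> L t"

lemma Phi_has_vector_derivative: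
  assumes "1 \<le> b" and t: "t \<in> {0<..<1}" and \<gamma>': "(\<gamma> has_vector_derivative \<gamma>') (at t)"
  shows "(Phi b has_vector_derivative
      - (forcing b (\<gamma> t) * Rratio_pow \<rho> q s b \<gamma> L t * \<gamma> t ^ (b - 1) * \<gamma>')) (at t)"
proof -
  define z R w where "z = \<gamma> t" and "R = Rratio_pow \<rho> q s b \<gamma> L t" and "w = z ^ (b - 1)"
  have "norm z < 1" "PP \<rho> q s z \<noteq> 0"
    using t norm_path_less_1 path_ne_Um path_ne_Up by (auto simp: z_def PP_factor)
  have "((\<lambda>t. \<gamma> t ^ b * PP \<rho> q s (\<gamma> t) * Fseries b (\<gamma> t)) has_vector_derivative
      \<gamma>' * - (w * (forcing b z + of_nat b * z * (q - z) * Fseries b z))) (at t)"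
    using field_vector_diff_chain_at[OF \<gamma>' weighted_Fseries_has_field_derivative[OF assms(1) \<open>norm z < 1\<close>[unfolded z_def]]]
    by (simp add: o_def z_def w_def)
  from has_vector_derivative_mult[OF this Rratio_pow_has_vector_derivative[OF t \<gamma>']]
  have "(Phi b has_vector_derivative
      z ^ b * PP \<rho> q s z * Fseries b z * (of_nat b * \<gamma>' * (q - z) / PP \<rho> q s z * R)
      + \<gamma>' * - (w * (forcing b z + of_nat b * z * (q - z) * Fseries b z)) * R) (at t)"
    by (simp add: Phi_def[abs_def] z_def R_def)
  moreover have "z ^ b = z * w" using assms(1) by (simp add: w_def power_eq_if)
  ultimately show ?thesis
    using \<open>PP \<rho> q s z \<noteq> 0\<close> by (simp add: z_def R_def w_def field_simps)
qed

lemma Phi_end: "Phi b 1 = 0"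
  using path_end by (simp add: Phi_def pathfinish_def PP_factor)

lemma Phi_start: "Phi b 0 = \<gamma> 0 ^ b * PP \<rho> q s (\<gamma> 0) * Fseries b (\<gamma> 0)"
  by (simp add: Phi_def Rratio_pow_def)

lemma continuous_on_Phi: "continuous_on {0..1} (Phi b)"
proof -
  obtain M where M: "\<And>t. t \<in> {0..<1} \<Longrightarrow> norm (Rratio_pow \<rho> q s b \<gamma> L t) \<le> M"
    using Rratio_pow_bounded by blast
  have cont: "continuous_on {0..1} (\<lambda>t. \<gamma> t ^ b * PP \<rho> q s (\<gamma> t) * Fseries b (\<gamma> t))"
    using norm_path_less_1
    by (auto simp: PP_def intro!: continuous_intros continuous_on_path
        continuous_on_compose2[OF continuous_on_Fseries continuous_on_path])
  have zero: "\<gamma> 1 ^ b * PP \<rho> q s (\<gamma> 1) * Fseries b (\<gamma> 1) = 0"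
    using path_end by (simp add: pathfinish_def PP_factor)
  note continuous_on_mult_vanishing_at_end[OF continuous_on_Rratio_pow M cont]
  then have "continuous_on {0..1}
      (\<lambda>t. \<gamma> t ^ b * PP \<rho> q s (\<gamma> t) * Fseries b (\<gamma> t) * Rratio_pow \<rho> q s b \<gamma> L t)"
    using zero by simp
  then show ?thesis by (simp add: Phi_def[abs_def])
qed

lemma path_vector_derivative:
  "\<exists>S. finite S \<and> (\<forall>t\<in>{0..1} - S. (\<gamma> has_vector_derivative vector_derivative \<gamma> (at t)) (at t))"
proof -
  obtain S D where "finite S" and D: "\<And>t. t \<in> {0..1} - S \<Longrightarrow> (\<gamma> has_vector_derivative D t) (at t)"
    using path_valid
    unfolding valid_path_def piecewise_C1_differentiable_on_def C1_differentiable_on_def by blast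
  moreover have "(\<gamma> has_vector_derivative vector_derivative \<gamma> (at t)) (at t)" if "t \<in> {0..1} - S" for t
    using D[OF that] vector_derivative_at[OF D[OF that]] by simp
  ultimately show ?thesis by blast
qed

lemma has_integral_forcing:
  assumes "1 \<le> b" "\<gamma> 0 \<noteq> 0"
  shows "((\<lambda>t. forcing b (\<gamma> t) * Rratio_pow \<rho> q s b \<gamma> L t * \<gamma> t ^ (b - 1)
      / (\<gamma> 0 ^ b * PP \<rho> q s (\<gamma> 0)) * vector_derivative \<gamma> (at t)) has_integral Fseries b (\<gamma> 0)) {0..1}"
proof -
  define K where "K = \<gamma> 0 ^ b * PP \<rho> q s (\<gamma> 0)"
  have "K \<noteq> 0"
    using assms(2) path_ne_Um[of 0] path_ne_Up[of 0] by (simp add: K_def PP_factor)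
  obtain S where "finite S"
    and \<gamma>': "\<And>t. t \<in> {0..1} - S \<Longrightarrow> (\<gamma> has_vector_derivative vector_derivative \<gamma> (at t)) (at t)"
    using path_vector_derivative by blast
  have "((\<lambda>t. forcing b (\<gamma> t) * Rratio_pow \<rho> q s b \<gamma> L t * \<gamma> t ^ (b - 1) / K * vector_derivative \<gamma> (at t))
      has_integral (- Phi b 1 / K - - Phi b 0 / K)) {0..1}"
  proof (rule fundamental_theorem_of_calculus_interior_strong[OF \<open>finite S\<close>, where f = "\<lambda>t. - Phi b t / K"])
    show "continuous_on {0..1} (\<lambda>t. - Phi b t / K)"
      using continuous_on_Phi \<open>K \<noteq> 0\<close> by (intro continuous_intros) auto
    fix t assume "t \<in> {0<..<1} - S"
    then show "((\<lambda>t. - Phi b t / K) has_vector_derivative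
        forcing b (\<gamma> t) * Rratio_pow \<rho> q s b \<gamma> L t * \<gamma> t ^ (b - 1) / K * vector_derivative \<gamma> (at t)) (at t)"
      using Phi_has_vector_derivative[OF assms(1) _ \<gamma>'[of t]]
      by (auto intro!: derivative_eq_intros simp: field_simps)
  qed simp
  moreover have "- Phi b 1 / K - - Phi b 0 / K = Fseries b (\<gamma> 0)"
    using \<open>K \<noteq> 0\<close> by (simp add: Phi_end Phi_start K_def)
  ultimately show ?thesis by (simp add: K_def)
qed

end

theorem mainTheorem15:
  fixes \<rho> q s :: real and b :: nat and u :: complex
    and \<gamma> :: "real \<Rightarrow> complex" and L :: "real \<Rightarrow> complex"
  assumes "\<rho> > 0" and "0 < q" and "q < 1" and "\<rho> + q < 1" and "s > 0"
    and "b \<ge> 1"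
    and "u \<in> ball 0 1" and "u \<noteq> 0"
    and "valid_path \<gamma>" and "path_image \<gamma> \<subseteq> ball 0 1"
    and "pathstart \<gamma> = u" and "pathfinish \<gamma> = complex_of_real (Um \<rho> q s)"
    and "continuous_on {0..<1} L"
    and "\<forall>t\<in>{0..<1}. exp (L t) = 1 - \<gamma> t / complex_of_real (Um \<rho> q s)"
  shows "((\<lambda>t. ((if b = 1 then 1 / (1 - \<gamma> t) else 0)
                 + (if b \<ge> 2 then of_nat b * EE \<rho> q s (b - 1) (\<gamma> t) else 0)
                 - (complex_of_real (real b * (1 + \<rho> + s)) - \<gamma> t) * EE \<rho> q s b (complex_of_real q))
               * Rratio_pow \<rho> q s b \<gamma> L t * \<gamma> t ^ (b - 1)
               / (u ^ b * PP \<rho> q s u)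
               * vector_derivative \<gamma> (at t))
          has_integral FF \<rho> q s b u) {0..1}"
proof -
  interpret ps_path \<rho> q s \<gamma> L
    using assms by unfold_locales auto
  have u: "\<gamma> 0 = u" "norm u < 1" using assms(7,11) by (auto simp: pathstart_def)
  have "((\<lambda>t. forcing b (\<gamma> t) * Rratio_pow \<rho> q s b \<gamma> L t * \<gamma> t ^ (b - 1)
      / (u ^ b * PP \<rho> q s u) * vector_derivative \<gamma> (at t)) has_integral FF \<rho> q s b u) {0..1}"
    using has_integral_forcing[OF assms(6)] assms(8) by (simp add: u FF_eq_Fseries)
  then show ?thesis
    by (rule has_integral_eq[rotated]) (simp only: forcing_cases[OF assms(6) norm_path_less_1])
qed

end
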